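(* Let $S$ be an instance of 3-Partition (with $n_1\ge\cdots\ge n_{3m}$), let $1\le k\le 3m$, let $i_1,\dots,i_{3m-k+1}$ be natural numbers and $W=\prod_{j=1}^{3m-k+1}(a_1b^{i_j}a_2)$. Suppose an accepting computation of $w_S$ satisfying the V-Condition contains a subcomputation $$W\,\|\,v_{4k-3}D_kv_{4k-3}\,v_{4k-2}D_kv_{4k-2}\,T \;\vdash^*\; W'\,\|\,T,$$ where $T$ denotes the rest of the input string. Then $W'=W$ and $i_j\le n_k$ for all $j$. Conversely, if $i_j\le n_k$ for all $j$, then for any string $T$ there is a computation $W\,\|\,v_{4k-3}D_kv_{4k-3}\,v_{4k-2}D_kv_{4k-2}\,T\vdash^* W\,\|\,T$.
   Context: Queue automaton: a configuration is written $Q\,\|\,x$ ($Q$ = queue contents, $x$ = remaining input); a step from $Q\,\|\,\sigma x$ ($\sigma$ a symbol) goes either to $Q\sigma\,\|\,x$ (push the input symbol) or, if $Q=\sigma Q'$, to $Q'\,\|\,x$ (the input symbol is matched against the leftmost queue symbol, which is popped; that queue symbol was pushed from an earlier input position, and we say these two input occurrences are matched). $\vdash^*$ is zero or more steps; $\varepsilon$ is the empty string; an accepting computation of $w$ is a computation $\varepsilon\,\|\,w\vdash^*\varepsilon\,\|\,\varepsilon$. An instance of 3-Partition is a sequence $S=\langle n_i:1\le i\le 3m\rangle$ of natural numbers such that $B=(\sum_{i=1}^{3m}n_i)/m$ is an integer and $B/4<n_i<B/2$ for all $i$; throughout, the $n_i$ are in non-increasing order. Alphabet $\{a_1,a_2,b,e_0,e,c_1,c_2,x,y\}$;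 $u^i$ is $i$ copies of $u$ concatenated, $\prod_{\ell=1}^k u_\ell=u_1\cdots u_k$. Define $U_\ell=a_1^2b^\ell a_2^2$, $v_\ell=c_1x^\ell y^\ell c_2$, $D_k=U_{n_k}^{3m-k+1}$, $E_k=U_B^{3m-k}\,a_1b^{n_k}a_2\,U_B^{3m-k}$, $F_k=U_B^{2(3m-k)}$, $\mathrm{Load}_S=e_0\prod_{i=1}^m(b^{2B}e)$, $\mathrm{Dist}_S=e_0\prod_{i=1}^m((a_1b^Ba_2)^3e)$, $\mathrm{Ver}_S=\prod_{k=1}^{3m}[v_{4k-3}D_kv_{4k-3}\,v_{4k-2}D_kv_{4k-2}\,v_{4k-1}E_kv_{4k-1}\,v_{4k}F_kv_{4k}]$, $w_S=\mathrm{Load}_S\mathrm{Dist}_S\mathrm{Ver}_S$. Each $v_\ell$ ($1\le\ell\le12m$) occurs exactly twice in $w_S$. An accepting computation of $w_S$ satisfies the V-Condition if for each $\ell$ with $1\le\ell\le 12m$, the symbols of the second occurrence of $v_\ell$ in $w_S$ are all matched against the corresponding symbols of the first occurrence of $v_\ell$ in $w_S$. *)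

theory Defs
  imports Main
begin

datatype sym = A1 | A2 | Bs | E0 | Ee | C1 | C2 | Xs | Ys
  (* a_1, a_2, b, e_0, e, c_1, c_2, x, y *)

type_synonym config = "sym list \<times> sym list"  (* (queue Q, remaining input) *)

inductive step :: "config \<Rightarrow> config \<Rightarrow> bool" where
  push: "step (Q, \<sigma> # w) (Q @ [\<sigma>], w)"
| pop:  "step (\<sigma> # Q, \<sigma> # w) (Q, w)"

abbreviation steps :: "config \<Rightarrow> config \<Rightarrow> bool" where
  "steps \<equiv> step\<^sup>*\<^sup>*"

text \<open>A computation on an input w is described by its sequence of actions
(True = push the input symbol, False = match/pop). Since every step consumes one
input symbol, step i processes input position i (0-based). We track the queue as a
list of the input positions from which its symbols were pushed, so that matching of
input occurrences is explicit.\<close>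

fun qpos :: "bool list \<Rightarrow> nat \<Rightarrow> nat list" where
  "qpos acts 0 = []"
| "qpos acts (Suc i) = (if acts ! i then qpos acts i @ [i] else tl (qpos acts i))"

definition valid_run :: "sym list \<Rightarrow> bool list \<Rightarrow> bool" where
  "valid_run w acts \<longleftrightarrow> length acts = length w \<and>
     (\<forall>i < length w. \<not> acts ! i \<longrightarrow> qpos acts i \<noteq> [] \<and> w ! hd (qpos acts i) = w ! i)"

definition config_at :: "sym list \<Rightarrow> bool list \<Rightarrow> nat \<Rightarrow> config" where
  "config_at w acts i = (map (\<lambda>j. w ! j) (qpos acts i), drop i w)"

definition accepting_run :: "sym list \<Rightarrow> bool list \<Rightarrow> bool" where
  "accepting_run w acts \<longleftrightarrow> valid_run w acts \<and> qpos acts (length w) = []"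

definition matched :: "sym list \<Rightarrow> bool list \<Rightarrow> nat \<Rightarrow> nat \<Rightarrow> bool" where
  "matched w acts j i \<longleftrightarrow> i < length w \<and> \<not> acts ! i \<and> qpos acts i \<noteq> [] \<and> hd (qpos acts i) = j"

definition tp_m :: "nat list \<Rightarrow> nat" where
  "tp_m S = length S div 3"

definition tp_B :: "nat list \<Rightarrow> nat" where
  "tp_B S = sum_list S div tp_m S"

definition three_partition :: "nat list \<Rightarrow> bool" where
  "three_partition S \<longleftrightarrow> 0 < length S \<and> 3 dvd length S \<and> tp_m S dvd sum_list S \<and>
     (\<forall>n \<in> set S. tp_B S < 4 * n \<and> 2 * n < tp_B S)"

text \<open>n_k (1-indexed).\<close>
definition nk :: "nat list \<Rightarrow> nat \<Rightarrow> nat" where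
  "nk S k = S ! (k - 1)"

definition pw :: "sym list \<Rightarrow> nat \<Rightarrow> sym list" where
  "pw u i = concat (replicate i u)"

definition U :: "nat \<Rightarrow> sym list" where
  "U l = [A1, A1] @ replicate l Bs @ [A2, A2]"

definition v :: "nat \<Rightarrow> sym list" where
  "v l = [C1] @ replicate l Xs @ replicate l Ys @ [C2]"

definition D :: "nat list \<Rightarrow> nat \<Rightarrow> sym list" where
  "D S k = pw (U (nk S k)) (3 * tp_m S - k + 1)"

definition E :: "nat list \<Rightarrow> nat \<Rightarrow> sym list" where
  "E S k = pw (U (tp_B S)) (3 * tp_m S - k) @ [A1] @ replicate (nk S k) Bs @ [A2]
           @ pw (U (tp_B S)) (3 * tp_m S - k)"

definition F :: "nat list \<Rightarrow> nat \<Rightarrow> sym list" where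
  "F S k = pw (U (tp_B S)) (2 * (3 * tp_m S - k))"

definition Load :: "nat list \<Rightarrow> sym list" where
  "Load S = E0 # concat (replicate (tp_m S) (replicate (2 * tp_B S) Bs @ [Ee]))"

definition Dist :: "nat list \<Rightarrow> sym list" where
  "Dist S = E0 # concat (replicate (tp_m S) (pw ([A1] @ replicate (tp_B S) Bs @ [A2]) 3 @ [Ee]))"

definition Ver :: "nat list \<Rightarrow> sym list" where
  "Ver S = concat (map (\<lambda>k.
      v (4*k-3) @ D S k @ v (4*k-3) @ v (4*k-2) @ D S k @ v (4*k-2) @
      v (4*k-1) @ E S k @ v (4*k-1) @ v (4*k) @ F S k @ v (4*k)) [1..<3 * tp_m S + 1])"

definition wS :: "nat list \<Rightarrow> sym list" where
  "wS S = Load S @ Dist S @ Ver S"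

text \<open>V-Condition: for each l in 1..12m, the symbols of the second occurrence of v_l
in w_S are matched against the corresponding symbols of the first occurrence.
(Each v_l occurs exactly twice as a factor of w_S; p < q range over its occurrence
positions.)\<close>
definition V_condition :: "nat list \<Rightarrow> bool list \<Rightarrow> bool" where
  "V_condition S acts \<longleftrightarrow>
     (\<forall>l. 1 \<le> l \<and> l \<le> 12 * tp_m S \<longrightarrow>
        (\<forall>p q. p < q \<and> take (length (v l)) (drop p (wS S)) = v l
                     \<and> take (length (v l)) (drop q (wS S)) = v l \<longrightarrow>
           (\<forall>t < length (v l). matched (wS S) acts (p + t) (q + t))))"

definition Wd :: "nat list \<Rightarrow> sym list" where
  "Wd ii = concat (map (\<lambda>i. [A1] @ replicate i Bs @ [A2]) ii)"

definition seg :: "nat list \<Rightarrow> nat \<Rightarrow> sym list" where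
  "seg S k = v (4*k-3) @ D S k @ v (4*k-3) @ v (4*k-2) @ D S k @ v (4*k-2)"

end

theory Submission
  imports Defs
begin

text \<open>By the V-condition, the first
  copy of each v is pushed entirely and its second copy is matched against it, so when the second
  copy is reached the head of the queue is the start of the first copy. Hence the pops performed
  while reading the block D_k = (U n_k)^M in between consume exactly the queue content present
  before the first copy. A block U n = a1 a1 b^n a2 a2 pops some a1^\<alpha> b^\<beta> a2^\<gamma> and pushes the rest;
  since W = \<Prod> a1 b^(i_j) a2 has as many units as D_k has blocks, every block pops exactly one
  unit a1 b^(i_j) a2, which forces i_j \<le> n_k and makes the pushed word \<Prod> a1 b^(n_k - i_j) a2.
  The second copy of D_k complements once more and restores W. Conversely, this schedule is a
  computation whenever all i_j \<le> n_k.\<close>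

definition masked :: "bool list \<Rightarrow> 'a list \<Rightarrow> 'a list" where
  "masked ms xs = map snd (filter fst (zip ms xs))"

lemma masked_append:
  "length ms = length xs \<Longrightarrow> masked (ms @ ms') (xs @ xs') = masked ms xs @ masked ms' xs'"
  by (simp add: masked_def)

lemma masked_replicate:
  "length ms = k \<Longrightarrow> masked ms (replicate k x) = replicate (length (filter id ms)) x"
proof (induction ms arbitrary: k)
  case (Cons b ms) then show ?case by (cases k) (auto simp: masked_def)
qed (simp add: masked_def)

lemma masked_U:
  assumes "length ms = n + 4"
  obtains \<alpha> \<beta> \<gamma> where "\<alpha> \<le> 2" "\<beta> \<le> n" "\<gamma> \<le> 2"
    "masked ms (U n) = replicate \<alpha> A1 @ replicate \<beta> Bs @ replicate \<gamma> A2"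
    "masked (map Not ms) (U n) = replicate (2 - \<alpha>) A1 @ replicate (n - \<beta>) Bs @ replicate (2 - \<gamma>) A2"
proof -
  define m1 m2 m3 where "m1 = take 2 ms" and "m2 = take n (drop 2 ms)" and "m3 = drop (n + 2) ms"
  have ms: "ms = m1 @ m2 @ m3"
    unfolding m1_def m2_def m3_def by (metis append_take_drop_id drop_drop)
  have len: "length m1 = 2" "length m2 = n" "length m3 = 2"
    using assms by (auto simp: m1_def m2_def m3_def)
  have U: "U n = replicate 2 A1 @ replicate n Bs @ replicate 2 A2"
    by (simp add: U_def numeral_2_eq_2)
  have compl: "length (filter Not m) = length m - length (filter id m)" for m :: "bool list"
    using sum_length_filter_compl[of id m] by (simp add: comp_def)
  show thesis
    by (rule that[of "length (filter id m1)" "length (filter id m2)" "length (filter id m3)"])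
       (use len in \<open>auto simp: ms U masked_append masked_replicate compl intro: order.trans[OF length_filter_le]\<close>)
qed

lemma Wd_Cons: "Wd (i # is) = A1 # replicate i Bs @ A2 # Wd is"
  by (simp add: Wd_def)

lemma Wd_Nil_iff: "Wd is = [] \<longleftrightarrow> is = []"
  by (cases "is") (simp_all add: Wd_Cons Wd_def)

lemma Wd_not_Cons_A2: "Wd is \<noteq> A2 # xs"
  by (cases "is") (simp_all add: Wd_Cons Wd_def)

lemma masked_block_inside_unit:
  assumes "replicate \<alpha> A1 @ replicate \<beta> Bs @ replicate \<gamma> A2 @ X = replicate r Bs @ A2 # Wd is"
    and "\<gamma> \<le> 2"
  shows "\<alpha> = 0 \<and> (\<beta> \<le> r \<and> \<gamma> = 0 \<and> X = replicate (r - \<beta>) Bs @ A2 # Wd is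
                 \<or> \<beta> = r \<and> \<gamma> = 1 \<and> X = Wd is)"
  using assms
proof (induction r arbitrary: \<beta>)
  case 0
  then have "\<alpha> = 0" "\<beta> = 0" by (cases \<alpha>; cases \<beta>; simp)+
  with 0 show ?case
    by (cases \<gamma>) (auto simp: Suc_le_eq numeral_2_eq_2 less_Suc_eq Wd_not_Cons_A2[THEN not_sym])
next
  case (Suc r)
  then have "\<alpha> = 0" by (cases \<alpha>) simp_all
  with Suc show ?case by (cases \<beta>; cases \<gamma>) auto
qed

lemma masked_block_at_unit:
  assumes "replicate \<alpha> A1 @ replicate \<beta> Bs @ replicate \<gamma> A2 @ X = Wd (i # is)"
    and "\<gamma> \<le> 2"
  shows "\<alpha> = 0 \<and> \<beta> = 0 \<and> \<gamma> = 0 \<and> X = Wd (i # is)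
       \<or> \<alpha> = 1 \<and> (\<beta> \<le> i \<and> \<gamma> = 0 \<and> X = replicate (i - \<beta>) Bs @ A2 # Wd is
                   \<or> \<beta> = i \<and> \<gamma> = 1 \<and> X = Wd is)"
proof (cases \<alpha>)
  case 0
  with assms show ?thesis by (cases \<beta>; cases \<gamma>) (simp_all add: Wd_Cons)
next
  case (Suc \<alpha>')
  with assms(1) have "replicate \<alpha>' A1 @ replicate \<beta> Bs @ replicate \<gamma> A2 @ X = replicate i Bs @ A2 # Wd is"
    by (simp add: Wd_Cons)
  from masked_block_inside_unit[OF this assms(2)] Suc show ?thesis by auto
qed

lemma length_U [simp]: "length (U n) = n + 4"
  by (simp add: U_def)

lemma pw_Suc: "pw u (Suc M) = u @ pw u M"
  by (simp add: pw_def)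

lemma length_pw_U: "length (pw (U n) M) = M * (n + 4)"
  by (induction M) (simp_all add: pw_def)

lemma masked_pw_U_Suc:
  assumes "length ms = Suc M * (n + 4)"
  obtains m' \<alpha> \<beta> \<gamma> where "length m' = M * (n + 4)" "\<alpha> \<le> 2" "\<beta> \<le> n" "\<gamma> \<le> 2"
    "masked ms (pw (U n) (Suc M)) = replicate \<alpha> A1 @ replicate \<beta> Bs @ replicate \<gamma> A2 @ masked m' (pw (U n) M)"
    "masked (map Not ms) (pw (U n) (Suc M)) =
       replicate (2 - \<alpha>) A1 @ replicate (n - \<beta>) Bs @ replicate (2 - \<gamma>) A2 @ masked (map Not m') (pw (U n) M)"
proof -
  define m m' where "m = take (n + 4) ms" and "m' = drop (n + 4) ms"
  have len: "length m = n + 4" "length m' = M * (n + 4)"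
    using assms by (simp_all add: m_def m'_def)
  obtain \<alpha> \<beta> \<gamma> where "\<alpha> \<le> 2" "\<beta> \<le> n" "\<gamma> \<le> 2"
    "masked m (U n) = replicate \<alpha> A1 @ replicate \<beta> Bs @ replicate \<gamma> A2"
    "masked (map Not m) (U n) = replicate (2 - \<alpha>) A1 @ replicate (n - \<beta>) Bs @ replicate (2 - \<gamma>) A2"
    using masked_U[OF len(1)] .
  moreover have "ms = m @ m'"
    by (simp add: m_def m'_def)
  ultimately show thesis
    using len by (intro that[of m' \<alpha> \<beta> \<gamma>]) (simp_all add: pw_Suc masked_append)
qed

text \<open>Each block U n contributes at most one complete unit a1 b^i a2; the second conjunct
  covers a masked word that begins inside a unit.\<close>

lemma masked_pw_U_units_le:
  assumes "length ms = M * (n + 4)"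
  shows "(masked ms (pw (U n) M) = Wd is \<longrightarrow> length is \<le> M)
       \<and> (masked ms (pw (U n) M) = replicate r Bs @ A2 # Wd is \<longrightarrow> length is < M)"
  using assms
proof (induction M arbitrary: ms "is" r)
  case 0
  then show ?case by (simp add: pw_def masked_def) (metis Wd_Nil_iff)
next
  case (Suc M)
  from masked_pw_U_Suc[OF Suc.prems] obtain m' \<alpha> \<beta> \<gamma> where
    len: "length m' = M * (n + 4)" and "\<gamma> \<le> 2" and
    split: "masked ms (pw (U n) (Suc M)) = replicate \<alpha> A1 @ replicate \<beta> Bs @ replicate \<gamma> A2 @ masked m' (pw (U n) M)"
    by metis
  note IH = Suc.IH[OF len]
  show ?case
  proof (intro conjI impI)
    assume "masked ms (pw (U n) (Suc M)) = Wd is"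
    then show "length is \<le> Suc M"
      using masked_block_at_unit[OF _ \<open>\<gamma> \<le> 2\<close>] IH split by (cases "is") fastforce+
  next
    assume "masked ms (pw (U n) (Suc M)) = replicate r Bs @ A2 # Wd is"
    then show "length is < Suc M"
      using masked_block_inside_unit[OF _ \<open>\<gamma> \<le> 2\<close>] IH split by fastforce
  qed
qed

text \<open>With as many units as blocks, every block contributes exactly one unit.\<close>

lemma masked_pw_U_eq_Wd:
  assumes "length ms = M * (n + 4)" and "masked ms (pw (U n) M) = Wd ii" and "length ii = M"
  shows "(\<forall>i \<in> set ii. i \<le> n) \<and> masked (map Not ms) (pw (U n) M) = Wd (map (\<lambda>i. n - i) ii)"
  using assms
proof (induction M arbitrary: ms ii)
  case 0
  then show ?case by (simp add: pw_def Wd_def)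
next
  case (Suc M)
  from masked_pw_U_Suc[OF Suc.prems(1)] obtain m' \<alpha> \<beta> \<gamma> where
    len: "length m' = M * (n + 4)" and "\<beta> \<le> n" "\<gamma> \<le> 2" and
    split: "masked ms (pw (U n) (Suc M)) = replicate \<alpha> A1 @ replicate \<beta> Bs @ replicate \<gamma> A2 @ masked m' (pw (U n) M)"
    and split_Not: "masked (map Not ms) (pw (U n) (Suc M)) =
       replicate (2 - \<alpha>) A1 @ replicate (n - \<beta>) Bs @ replicate (2 - \<gamma>) A2 @ masked (map Not m') (pw (U n) M)"
    by metis
  obtain i "is" where ii: "ii = i # is" "length is = M"
    using Suc.prems(3) by (cases ii) auto
  note few_units = masked_pw_U_units_le[OF len]
  from masked_block_at_unit[OF Suc.prems(2)[unfolded split ii] \<open>\<gamma> \<le> 2\<close>] few_units ii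
  have "\<alpha> = 1 \<and> \<beta> = i \<and> \<gamma> = 1 \<and> masked m' (pw (U n) M) = Wd is"
    by fastforce
  with Suc.IH[OF len] ii \<open>\<beta> \<le> n\<close> split_Not show ?case
    by (simp add: Wd_Cons numeral_2_eq_2)
qed

definition pushed :: "bool list \<Rightarrow> nat \<Rightarrow> nat \<Rightarrow> nat list" where
  "pushed acts i j = filter (\<lambda>t. acts ! t) [i..<j]"

definition popped :: "bool list \<Rightarrow> nat \<Rightarrow> nat \<Rightarrow> nat list" where
  "popped acts i j = filter (\<lambda>t. \<not> acts ! t) [i..<j]"

lemma qpos_lt_pushed: "x \<in> set (qpos acts i) \<Longrightarrow> x < i \<and> acts ! x"
proof (induction i)
  case (Suc i)
  have "set (tl (qpos acts i)) \<subseteq> set (qpos acts i)"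
    by (cases "qpos acts i") auto
  with Suc show ?case by (cases "acts ! i") auto
qed simp

lemma distinct_qpos: "distinct (qpos acts i)"
proof (induction i)
  case (Suc i)
  then show ?case by (auto simp: distinct_tl dest: qpos_lt_pushed)
qed simp

lemma qpos_pops: "\<forall>t<L. \<not> acts ! (i + t) \<Longrightarrow> qpos acts (i + L) = drop L (qpos acts i)"
  by (induction L) (simp_all add: drop_Suc tl_drop)

lemma qpos_pushes: "\<forall>t<L. acts ! (i + t) \<Longrightarrow> qpos acts (i + L) = qpos acts i @ [i..<i + L]"
  by (induction L) simp_all

lemma qpos_interval:
  assumes run: "valid_run w acts" and "i \<le> j" and "j \<le> length w"
  defines "c \<equiv> length (popped acts i j)" and "Z \<equiv> qpos acts i @ pushed acts i j"
  shows "c \<le> length Z \<and> qpos acts j = drop c Z \<and> map ((!) w) (popped acts i j) = map ((!) w) (take c Z)"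
  using assms(2,3) unfolding c_def Z_def
proof (induction j rule: dec_induct)
  case base
  then show ?case by (simp add: popped_def pushed_def)
next
  case (step j)
  define c Z where "c = length (popped acts i j)" and "Z = qpos acts i @ pushed acts i j"
  have IH: "c \<le> length Z" "qpos acts j = drop c Z" "map ((!) w) (popped acts i j) = map ((!) w) (take c Z)"
    using step by (simp_all add: c_def Z_def)
  show ?case
  proof (cases "acts ! j")
    case True
    then have "popped acts i (Suc j) = popped acts i j" "qpos acts i @ pushed acts i (Suc j) = Z @ [j]"
      using step(1) by (simp_all add: popped_def pushed_def Z_def)
    with True IH step(1) show ?thesis
      by (simp add: c_def)
  next
    case False
    then have pop: "popped acts i (Suc j) = popped acts i j @ [j]" "qpos acts i @ pushed acts i (Suc j) = Z"
      using step(1) by (simp_all add: popped_def pushed_def Z_def)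
    from False run step(2,4) have "qpos acts j \<noteq> []" and head: "w ! hd (qpos acts j) = w ! j"
      by (auto simp: valid_run_def)
    then have "c < length Z" and "hd (qpos acts j) = Z ! c"
      using IH(2) by (auto simp: hd_drop_conv_nth)
    with False IH head show ?thesis
      unfolding pop by (simp add: c_def take_Suc_conv_app_nth drop_Suc tl_drop)
  qed
qed

text \<open>Since queue entries are distinct, the head at step j pins down how many pops occurred.\<close>

lemma qpos_flush:
  assumes run: "valid_run w acts" and "i \<le> j" and "j \<le> length w"
    and queue: "qpos acts i = Q @ x # Q'"
    and head: "qpos acts j \<noteq> []" "hd (qpos acts j) = x"
  shows "qpos acts j = x # Q' @ pushed acts i j \<and> map ((!) w) (popped acts i j) = map ((!) w) Q"
proof -
  define c where "c = length (popped acts i j)"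
  define Z where "Z = qpos acts i @ pushed acts i j"
  have evol: "qpos acts j = drop c Z" "map ((!) w) (popped acts i j) = map ((!) w) (take c Z)"
    using qpos_interval[OF assms(1-3)] by (simp_all add: c_def Z_def)
  have "distinct Z"
    using distinct_qpos[of acts i] by (fastforce simp: Z_def pushed_def dest: qpos_lt_pushed)
  moreover have "c < length Z" "Z ! c = x"
    using head evol(1) by (auto simp: hd_drop_conv_nth)
  moreover have "length Q < length Z" "Z ! length Q = x"
    by (simp_all add: Z_def queue nth_append)
  ultimately have "c = length Q"
    using nth_eq_iff_index_eq by metis
  with evol show ?thesis
    by (simp add: Z_def queue)
qed

lemma map_nth_filter_upt_eq_masked:
  "a + n \<le> length w \<Longrightarrow>
   map ((!) w) (filter P [a..<a + n]) = masked (map (\<lambda>t. P (a + t)) [0..<n]) (take n (drop a w))"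
proof (induction n)
  case (Suc n)
  then have "take (Suc n) (drop a w) = take n (drop a w) @ [w ! (a + n)]"
    by (simp add: take_Suc_conv_app_nth)
  with Suc show ?case
    by (simp add: masked_append) (simp add: masked_def)
qed (simp add: masked_def)

lemma qpos_across_pw_U:
  assumes run: "valid_run w acts"
    and block: "w = u @ pw (U n) M @ r" and a: "a = length u"
    and queue: "qpos acts a = Q @ x # Q'" "map ((!) w) Q = Wd ii" "length ii = M"
    and head: "qpos acts (a + M * (n + 4)) \<noteq> []" "hd (qpos acts (a + M * (n + 4))) = x"
  shows "(\<forall>i \<in> set ii. i \<le> n)
       \<and> qpos acts (a + M * (n + 4)) = x # Q' @ pushed acts a (a + M * (n + 4))
       \<and> map ((!) w) (pushed acts a (a + M * (n + 4))) = Wd (map (\<lambda>i. n - i) ii)"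
proof -
  let ?L = "M * (n + 4)" and ?pop = "map (\<lambda>t. \<not> acts ! (a + t)) [0..<M * (n + 4)]"
  have len: "a + ?L \<le> length w" and window: "take ?L (drop a w) = pw (U n) M"
    using block a by (simp_all add: length_pw_U)
  have flush: "qpos acts (a + ?L) = x # Q' @ pushed acts a (a + ?L)"
      "map ((!) w) (popped acts a (a + ?L)) = Wd ii"
    using qpos_flush[OF run _ len queue(1) head] queue(2) by simp_all
  then have "masked ?pop (pw (U n) M) = Wd ii"
    using map_nth_filter_upt_eq_masked[OF len] window by (simp add: popped_def)
  from masked_pw_U_eq_Wd[OF _ this queue(3)]
  have "(\<forall>i \<in> set ii. i \<le> n) \<and> masked (map Not ?pop) (pw (U n) M) = Wd (map (\<lambda>i. n - i) ii)"
    by simp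
  with flush(1) show ?thesis
    using map_nth_filter_upt_eq_masked[OF len, of "\<lambda>t. acts ! t"] window
    by (simp add: pushed_def comp_def)
qed

lemma matched_copy:
  assumes "\<forall>t<L. matched w acts (p + t) (q + t)" and "0 < L"
  shows "\<forall>t<L. acts ! (p + t)" "\<forall>t<L. \<not> acts ! (q + t)" "qpos acts q \<noteq> [] \<and> hd (qpos acts q) = p"
  using assms qpos_lt_pushed[OF list.set_sel(1)] by (auto simp: matched_def) (metis)

lemma queue_through_D_pair:
  assumes run: "valid_run w acts"
    and w: "w = pre @ v1 @ pw (U n) M @ v1 @ v2 @ pw (U n) M @ v2 @ T"
    and "v1 \<noteq> []" "v2 \<noteq> []"
    and copy1: "\<forall>t < length v1. matched w acts (length pre + t) (length (pre @ v1 @ pw (U n) M) + t)"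
    and copy2: "\<forall>t < length v2. matched w acts (length (pre @ v1 @ pw (U n) M @ v1) + t)
                                         (length (pre @ v1 @ pw (U n) M @ v1 @ v2 @ pw (U n) M) + t)"
    and queue: "map ((!) w) (qpos acts (length pre)) = Wd ii" "length ii = M"
  shows "(\<forall>i \<in> set ii. i \<le> n) \<and> map ((!) w) (qpos acts (length w - length T)) = Wd ii"
proof -
  define L1 L2 LU where "L1 = length v1" and "L2 = length v2" and "LU = M * (n + 4)"
  define n0 a1 q1 p2 a2 q2 where "n0 = length pre" and "a1 = n0 + L1" and "q1 = a1 + LU"
    and "p2 = q1 + L1" and "a2 = p2 + L2" and "q2 = a2 + LU"
  note pos = L1_def L2_def LU_def n0_def a1_def q1_def p2_def a2_def q2_def length_pw_U
  have "0 < L1" "0 < L2"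
    using \<open>v1 \<noteq> []\<close> \<open>v2 \<noteq> []\<close> by (simp_all add: L1_def L2_def)
  have "length pre = n0" "length (pre @ v1 @ pw (U n) M) = q1"
    "length (pre @ v1 @ pw (U n) M @ v1) = p2" "length (pre @ v1 @ pw (U n) M @ v1 @ v2 @ pw (U n) M) = q2"
    by (simp_all add: pos)
  with matched_copy[OF copy1 \<open>v1 \<noteq> []\<close>[folded length_greater_0_conv]]
    matched_copy[OF copy2 \<open>v2 \<noteq> []\<close>[folded length_greater_0_conv]]
  have push1: "\<forall>t<L1. acts ! (n0 + t)" and pop1: "\<forall>t<L1. \<not> acts ! (q1 + t)"
    and head1: "qpos acts q1 \<noteq> []" "hd (qpos acts q1) = n0"
    and push2: "\<forall>t<L2. acts ! (p2 + t)" and pop2: "\<forall>t<L2. \<not> acts ! (q2 + t)"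
    and head2: "qpos acts q2 \<noteq> []" "hd (qpos acts q2) = p2"
    by (simp_all add: L1_def L2_def)
  have [simp]: "[n0..<a1] = n0 # [Suc n0..<a1]" "[p2..<a2] = p2 # [Suc p2..<a2]"
    using \<open>0 < L1\<close> \<open>0 < L2\<close> by (simp_all add: a1_def a2_def upt_conv_Cons)
  have w1: "w = (pre @ v1) @ pw (U n) M @ v1 @ v2 @ pw (U n) M @ v2 @ T" "a1 = length (pre @ v1)"
    using w by (simp_all add: pos)
  have "qpos acts a1 = qpos acts n0 @ n0 # [Suc n0..<a1]"
    using qpos_pushes[OF push1] unfolding a1_def[symmetric] by simp
  from qpos_across_pw_U[OF run w1 this queue[folded n0_def] head1[unfolded q1_def LU_def]]
  have le: "\<forall>i \<in> set ii. i \<le> n"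
    and qpos_q1: "qpos acts q1 = [n0..<a1] @ pushed acts a1 q1"
    and word1: "map ((!) w) (pushed acts a1 q1) = Wd (map (\<lambda>i. n - i) ii)"
    by (simp_all add: q1_def LU_def)
  have w2: "w = (pre @ v1 @ pw (U n) M @ v1 @ v2) @ pw (U n) M @ v2 @ T"
    "a2 = length (pre @ v1 @ pw (U n) M @ v1 @ v2)"
    using w by (simp_all add: pos)
  have "qpos acts p2 = pushed acts a1 q1"
    using qpos_pops[OF pop1] qpos_q1 by (simp add: p2_def a1_def)
  then have "qpos acts a2 = pushed acts a1 q1 @ p2 # [Suc p2..<a2]"
    using qpos_pushes[OF push2] unfolding a2_def[symmetric] by simp
  from qpos_across_pw_U[OF run w2 this word1 _ head2[unfolded q2_def LU_def]] queue(2)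
  have qpos_q2: "qpos acts q2 = [p2..<a2] @ pushed acts a2 q2"
    and word2: "map ((!) w) (pushed acts a2 q2) = Wd (map (\<lambda>i. n - i) (map (\<lambda>i. n - i) ii))"
    by (simp_all add: q2_def LU_def)
  have "map (\<lambda>i. n - i) (map (\<lambda>i. n - i) ii) = ii"
    using le by (induction ii) auto
  moreover have "length w - length T = q2 + L2"
    using w by (simp add: pos)
  then have "qpos acts (length w - length T) = pushed acts a2 q2"
    using qpos_pops[OF pop2] qpos_q2 by (simp add: a2_def)
  ultimately show ?thesis
    using le word2 by simp
qed

lemma steps_push: "steps (Q, xs @ r) (Q @ xs, r)"
proof (induction xs arbitrary: Q)
  case (Cons x xs)
  have "step (Q, x # xs @ r) (Q @ [x], xs @ r)"
    by (rule step.push)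
  with Cons[of "Q @ [x]"] show ?case
    by (simp add: converse_rtranclp_into_rtranclp)
qed simp

lemma steps_pop: "steps (xs @ Q, xs @ r) (Q, r)"
proof (induction xs)
  case (Cons x xs)
  have "step (x # xs @ Q, x # xs @ r) (xs @ Q, xs @ r)"
    by (rule step.pop)
  with Cons show ?case
    by (simp add: converse_rtranclp_into_rtranclp)
qed simp

lemma steps_unit_through_U:
  assumes "i \<le> n"
  shows "steps (Wd [i] @ Q, U n @ r) (Q @ Wd [n - i], r)"
proof -
  have U: "U n @ r = [A1] @ [A1] @ replicate i Bs @ replicate (n - i) Bs @ [A2] @ [A2] @ r"
    using assms by (simp add: U_def replicate_add[symmetric])
  have "steps (Wd [i] @ Q, U n @ r) (replicate i Bs @ A2 # Q, [A1] @ replicate i Bs @ replicate (n - i) Bs @ [A2] @ [A2] @ r)"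
    unfolding U using steps_pop[of "[A1]"] by (simp add: Wd_def)
  also have "steps \<dots> (replicate i Bs @ A2 # Q @ [A1], replicate i Bs @ replicate (n - i) Bs @ [A2] @ [A2] @ r)"
    using steps_push[of "replicate i Bs @ A2 # Q" "[A1]"] by simp
  also have "steps \<dots> (A2 # Q @ [A1], replicate (n - i) Bs @ [A2] @ [A2] @ r)"
    by (rule steps_pop)
  also have "steps \<dots> (A2 # Q @ [A1] @ replicate (n - i) Bs, [A2] @ [A2] @ r)"
    using steps_push[of "A2 # Q @ [A1]" "replicate (n - i) Bs"] by simp
  also have "steps \<dots> (Q @ [A1] @ replicate (n - i) Bs, [A2] @ r)"
    using steps_pop[of "[A2]"] by simp
  also have "steps \<dots> (Q @ Wd [n - i], r)"
    using steps_push[of "Q @ [A1] @ replicate (n - i) Bs" "[A2]"] by (simp add: Wd_def)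
  finally show ?thesis .
qed

lemma steps_Wd_through_pw_U:
  "\<forall>i \<in> set ii. i \<le> n \<Longrightarrow>
   steps (Wd ii @ Q, pw (U n) (length ii) @ r) (Q @ Wd (map (\<lambda>i. n - i) ii), r)"
proof (induction ii arbitrary: Q)
  case Nil
  then show ?case by (simp add: Wd_def pw_def)
next
  case (Cons i ii)
  have "steps (Wd [i] @ Wd ii @ Q, U n @ pw (U n) (length ii) @ r) ((Wd ii @ Q) @ Wd [n - i], pw (U n) (length ii) @ r)"
    using Cons.prems by (intro steps_unit_through_U) simp
  also have "steps \<dots> ((Q @ Wd [n - i]) @ Wd (map (\<lambda>i. n - i) ii), r)"
    using Cons.IH[of "Q @ Wd [n - i]"] Cons.prems by simp
  finally show ?case
    by (simp add: Wd_def pw_Suc)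
qed

lemma steps_through_D_pair:
  assumes "\<forall>i \<in> set ii. i \<le> n"
  shows "steps (Wd ii, v1 @ pw (U n) (length ii) @ v1 @ v2 @ pw (U n) (length ii) @ v2 @ T) (Wd ii, T)"
proof -
  let ?D = "pw (U n) (length ii)" and ?ii' = "map (\<lambda>i. n - i) ii"
  have "?ii' \<in> lists {..n}" and twice: "map (\<lambda>i. n - i) ?ii' = ii"
    using assms by (auto, induction ii) auto
  have "steps (Wd ii, v1 @ ?D @ v1 @ v2 @ ?D @ v2 @ T) (Wd ii @ v1, ?D @ v1 @ v2 @ ?D @ v2 @ T)"
    by (rule steps_push)
  also have "steps \<dots> (v1 @ Wd ?ii', v1 @ v2 @ ?D @ v2 @ T)"
    by (rule steps_Wd_through_pw_U[OF assms])
  also have "steps \<dots> (Wd ?ii', v2 @ ?D @ v2 @ T)"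
    by (rule steps_pop)
  also have "steps \<dots> (Wd ?ii' @ v2, ?D @ v2 @ T)"
    by (rule steps_push)
  also have "steps \<dots> (v2 @ Wd ii, v2 @ T)"
    using steps_Wd_through_pw_U[of ?ii' n v2 "v2 @ T"] \<open>?ii' \<in> lists {..n}\<close> twice by auto
  also have "steps \<dots> (Wd ii, T)"
    by (rule steps_pop)
  finally show ?thesis .
qed

lemma V_condition_copy:
  assumes "V_condition S acts" and "1 \<le> l" "l \<le> 12 * tp_m S"
    and "wS S = u @ v l @ u' @ v l @ r"
  shows "\<forall>t < length (v l). matched (wS S) acts (length u + t) (length (u @ v l @ u') + t)"
proof -
  have "length u < length (u @ v l @ u')"
    by (simp add: v_def)
  with assms show ?thesis
    unfolding V_condition_def by simp
qed

lemma seg_eq_pw_U: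
  "seg S k = v (4 * k - 3) @ pw (U (nk S k)) (3 * tp_m S - k + 1) @ v (4 * k - 3)
           @ v (4 * k - 2) @ pw (U (nk S k)) (3 * tp_m S - k + 1) @ v (4 * k - 2)"
  by (simp add: seg_def D_def)

lemma queue_through_seg:
  assumes "1 \<le> k" "k \<le> 3 * tp_m S" and "length ii = 3 * tp_m S - k + 1"
    and run: "accepting_run (wS S) acts" and V: "V_condition S acts"
    and w: "wS S = pre @ seg S k @ T"
    and start: "map ((!) (wS S)) (qpos acts (length pre)) = Wd ii"
  shows "(\<forall>i \<in> set ii. i \<le> nk S k) \<and> map ((!) (wS S)) (qpos acts (length (wS S) - length T)) = Wd ii"
proof -
  let ?v1 = "v (4 * k - 3)" and ?v2 = "v (4 * k - 2)" and ?D = "pw (U (nk S k)) (length ii)"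
  have l: "1 \<le> 4 * k - 3" "4 * k - 3 \<le> 12 * tp_m S" "1 \<le> 4 * k - 2" "4 * k - 2 \<le> 12 * tp_m S"
    using assms(1,2) by simp_all
  have w': "wS S = pre @ ?v1 @ ?D @ ?v1 @ ?v2 @ ?D @ ?v2 @ T"
    using w assms(3) by (simp add: seg_eq_pw_U)
  have copy1: "\<forall>t < length ?v1. matched (wS S) acts (length pre + t) (length (pre @ ?v1 @ ?D) + t)"
    by (rule V_condition_copy[OF V l(1,2) w'])
  have "wS S = (pre @ ?v1 @ ?D @ ?v1) @ ?v2 @ ?D @ ?v2 @ T"
    using w' by simp
  from V_condition_copy[OF V l(3,4) this]
  have copy2: "\<forall>t < length ?v2. matched (wS S) acts (length (pre @ ?v1 @ ?D @ ?v1) + t)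
                                           (length (pre @ ?v1 @ ?D @ ?v1 @ ?v2 @ ?D) + t)"
    by simp
  have "?v1 \<noteq> []" "?v2 \<noteq> []"
    by (simp_all add: v_def)
  moreover have "valid_run (wS S) acts"
    using run by (simp add: accepting_run_def)
  ultimately show ?thesis
    using queue_through_D_pair[OF _ w' _ _ copy1 copy2 start] by blast
qed

theorem lemma6:
  fixes S :: "nat list" and k :: nat and ii :: "nat list"
  assumes "three_partition S"
    and "sorted_wrt (\<ge>) S"
    and "1 \<le> k" and "k \<le> 3 * tp_m S"
    and "length ii = 3 * tp_m S - k + 1"
  shows "(\<forall>acts pre T W'.
            accepting_run (wS S) acts \<and> V_condition S acts \<and>
            wS S = pre @ seg S k @ T \<and>
            config_at (wS S) acts (length pre) = (Wd ii, seg S k @ T) \<and>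
            config_at (wS S) acts (length pre + length (seg S k)) = (W', T)
          \<longrightarrow> W' = Wd ii \<and> (\<forall>i \<in> set ii. i \<le> nk S k))
       \<and> ((\<forall>i \<in> set ii. i \<le> nk S k) \<longrightarrow> (\<forall>T. steps (Wd ii, seg S k @ T) (Wd ii, T)))"
proof (intro conjI allI impI)
  fix acts pre T W'
  assume "accepting_run (wS S) acts \<and> V_condition S acts \<and> wS S = pre @ seg S k @ T \<and>
    config_at (wS S) acts (length pre) = (Wd ii, seg S k @ T) \<and>
    config_at (wS S) acts (length pre + length (seg S k)) = (W', T)"
  then have run: "accepting_run (wS S) acts" and V: "V_condition S acts" and w: "wS S = pre @ seg S k @ T"
    and "config_at (wS S) acts (length pre) = (Wd ii, seg S k @ T)"
    and "config_at (wS S) acts (length pre + length (seg S k)) = (W', T)"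
    by blast+
  then have start: "map ((!) (wS S)) (qpos acts (length pre)) = Wd ii"
    and final: "map ((!) (wS S)) (qpos acts (length pre + length (seg S k))) = W'"
    by (simp_all add: config_at_def)
  have "length pre + length (seg S k) = length (wS S) - length T"
    using w by simp
  with queue_through_seg[OF assms(3-5) run V w start] final
  show "W' = Wd ii" "\<forall>i \<in> set ii. i \<le> nk S k"
    by simp_all
next
  fix T
  assume "\<forall>i \<in> set ii. i \<le> nk S k"
  from steps_through_D_pair[OF this] show "steps (Wd ii, seg S k @ T) (Wd ii, T)"
    by (simp add: seg_eq_pw_U assms(5))
qed

end
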